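(* For an oriented, augmented, right-angled hexagon $(\vec{L}_1,\vec{F}_2,\vec{L}_3,\vec{F}_4,\vec{L}_5,\vec{F}_6)$ in $\mathbb{H}^4$ with any choice of $\{e_1,e_2\}$-quaternion half side-lengths $\delta_1,\delta_3,\delta_5$ and $e_2$-complex half side-lengths $\delta_2,\delta_4,\delta_6$, the following formulas hold: \begin{eqnarray*} & & \sinh\delta_1 \cosh\delta_2 \sinh\delta_3 + \cosh\delta_1 \cosh\delta_2 \cosh\delta_3 \\ &=& \varepsilon\,(\sinh\delta_4 \cosh\delta_5 \sinh\delta_6 + \cosh\delta_4 \cosh\delta_5 \cosh\delta_6)^*; \\ & & \sinh\delta_1 \cosh\delta_2 \cosh\delta_3 + \cosh\delta_1 \cosh\delta_2 \sinh\delta_3 \\ &=& \varepsilon\,(\sinh\delta_4 \sinh\delta_5 \sinh\delta_6 - \cosh\delta_4 \sinh\delta_5 \cosh\delta_6)^*; \\ & & \sinh\delta_1 \sinh\delta_2 \sinh\delta_3 - \cosh\delta_1 \sinh\delta_2 \cosh\delta_3 \\ &=& \varepsilon\,(\sinh\delta_4 \cosh\delta_5 \cosh\delta_6 + \cosh\delta_4 \cosh\delta_5 \sinh\delta_6)^*; \\ & & \sinh\delta_1 \sinh\delta_2 \cosh\delta_3 - \cosh\delta_1 \sinh\delta_2 \sinh\delta_3 \\ &=& \varepsilon\,(\sinh\delta_4 \sinh\delta_5 \cosh\delta_6 - \cosh\delta_4 \sinh\delta_5 \sinh\delta_6)^*, \end{eqnarray*} with $\varepsilon = 1$ or $-1$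 (the same $\varepsilon$ in all four identities), depending on the choices of the six half side-lengths $\{\delta_n\}_{n=1}^{6}$.
   Context: $\mathbb{A}_2$ is the Clifford algebra $\mathsf{Cl}_{0,2}$: the real associative algebra generated by $e_1,e_2$ with $e_1^2=e_2^2=-1$, $e_1e_2+e_2e_1=0$ (isomorphic to the quaternions). Its reverse involution is $(x_0+x_1e_1+x_2e_2+x_{12}e_1e_2)^*=x_0+x_1e_1+x_2e_2-x_{12}e_1e_2$, and $(ab)^*=b^*a^*$. For $x\in\mathbb{A}_2$, $\exp x=\sum_{m\ge0}x^m/m!$, $\cosh x=(\exp x+\exp(-x^* ))/2$, $\sinh x=(\exp x-\exp(-x^* ))/2$; $\log$ denotes the multivalued inverse of $\exp$. A nonzero $a\in\mathbb{A}_2$ is written $a=|a|(\cos\theta+u\sin\theta)$ with $u$ a unit element with zero real part ($u^2=-1$; unique up to sign if $a\notin\mathbb{R}$, arbitrary if $a\in\mathbb{R}$); its periods are $2m\pi u$, $m\in\mathbb{Z}$. $\mathbb{H}^4$ is the upper half-space $\{x_0+x_1e_1+x_2e_2+x_3e_3: x_3>0\}$ (inside the Clifford algebra $\mathsf{Cl}_{0,3}$) with boundary $(\mathbb{R}+\mathbb{R}e_1+\mathbb{R}e_2)\cup\{\infty\}$, oriented by the ordered frame at $e_3$ given by the oriented geodesics from $-1$ to $1$, $-e_1$ to $e_1$, $-e_2$ to $e_2$, $0$ to $\infty$. Orientation-preserving isometries of $\mathbb{H}^4$ are the Möbius maps $x\mapsto(ax+b)(cx+d)^{-1}$ given by Vahlen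 matrices $\pm\begin{pmatrix}a&b\\c&d\end{pmatrix}$ with $a,b,c,d\in\mathbb{A}_2$, $ad^*-bc^*=1$, $ab^*,cd^*\in\mathbb{R}+\mathbb{R}e_1+\mathbb{R}e_2$. Write $\vec{L}_{[u,v]}$ for the geodesic from $u$ to $v$; $\vec{L}_{\rm v}=\vec{L}_{[0,\infty]}$; $\vec{F}_{\rm h}=(\vec{L}_{[-1,1]},\vec{\Pi}_{\rm h})$ where $\vec{\Pi}_{\rm h}$ is the plane containing $L_{[-1,1]}$ and $L_{[-e_1,e_1]}$ oriented by this ordered pair. A flag $(L,\Pi)$ is a line $L$ contained in a totally geodesic plane $\Pi$; an oriented flag has both oriented. A line $L'$ and a flag $(L,\Pi)$ are orthogonal if $L'$ meets $L$ and is perpendicular to $\Pi$. An oriented augmented right-angled hexagon $(\vec{L}_1,\vec{F}_2,\vec{L}_3,\vec{F}_4,\vec{L}_5,\vec{F}_6)$ consists of oriented lines $\vec{L}_1,\vec{L}_3,\vec{L}_5$ and oriented flags $\vec{F}_n=(\vec{L}_n,\vec{\Pi}_n)$, $n=2,4,6$, with each consecutive pair (indices mod 6) orthogonal. For $n=1,3,5$: let $\iota$ be the orientation-preserving isometry with $\iota(\vec{L}_n)=\vec{L}_{\rm v}$, $\iota(\vec{F}_{n-1})=\vec{F}_{\rm h}$; the orientation-preserving isometry fixing $\vec{L}_{\rm v}$ and sending $\vec{F}_{\rm h}$ to $\iota(\vec{F}_{n+1})$ has Vahlen matrices $\pm\mathrm{diag}(a,(a^* )^{-1})$; a quaternion half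 side-length is $\delta_n\in\log(\pm a)$, taken modulo period. For $n=2,4,6$: let $\iota$ satisfy $\iota(\vec{F}_n)=\vec{F}_{\rm h}$, $\iota(\vec{L}_{n-1})=\vec{L}_{\rm v}$; the orientation-preserving isometry preserving $\vec{F}_{\rm h}$ and sending $\vec{L}_{\rm v}$ to $\iota(\vec{L}_{n+1})$ has Vahlen matrices $\pm\begin{pmatrix}\cosh\delta_n&\sinh\delta_n\\ \sinh\delta_n&\cosh\delta_n\end{pmatrix}$ with $\delta_n\in\mathbb{R}+\mathbb{R}e_2$ modulo $2\pi e_2$, determined up to adding $\pi e_2$; this is an $e_2$-complex half side-length. *)

theory Defs
  imports Complex_Main
begin

section \<open>The algebra A_2 = Cl_{0,2} (components along 1, e1, e2, e1e2)\<close>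

datatype quat = Q (c0: real) (c1: real) (c2: real) (c12: real)

instantiation quat :: "{zero, one, plus, minus, uminus, times}"
begin
definition "0 = Q 0 0 0 0"
definition "1 = Q 1 0 0 0"
definition "x + y = Q (c0 x + c0 y) (c1 x + c1 y) (c2 x + c2 y) (c12 x + c12 y)"
definition "x - y = Q (c0 x - c0 y) (c1 x - c1 y) (c2 x - c2 y) (c12 x - c12 y)"
definition "- x = Q (- c0 x) (- c1 x) (- c2 x) (- c12 x)"
text \<open>Clifford product with e1^2 = e2^2 = -1, e1 e2 = - e2 e1.\<close>
definition "x * y = Q
   (c0 x * c0 y - c1 x * c1 y - c2 x * c2 y - c12 x * c12 y)
   (c0 x * c1 y + c1 x * c0 y + c2 x * c12 y - c12 x * c2 y)
   (c0 x * c2 y - c1 x * c12 y + c2 x * c0 y + c12 x * c1 y)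
   (c0 x * c12 y + c1 x * c2 y - c2 x * c1 y + c12 x * c0 y)"
instance ..
end

instance quat :: power ..

definition qscale :: "real \<Rightarrow> quat \<Rightarrow> quat" where
  "qscale r x = Q (r * c0 x) (r * c1 x) (r * c2 x) (r * c12 x)"

text \<open>Reverse involution: (x0 + x1 e1 + x2 e2 + x12 e1e2)^* = x0 + x1 e1 + x2 e2 - x12 e1e2.\<close>
definition qrev :: "quat \<Rightarrow> quat" where
  "qrev x = Q (c0 x) (c1 x) (c2 x) (- c12 x)"

text \<open>Multiplicative inverse (0 for 0).\<close>
definition qinv :: "quat \<Rightarrow> quat" where
  "qinv x = (let n = (c0 x)\<^sup>2 + (c1 x)\<^sup>2 + (c2 x)\<^sup>2 + (c12 x)\<^sup>2 in
     Q (c0 x / n) (- c1 x / n) (- c2 x / n) (- c12 x / n))"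

definition qexp :: "quat \<Rightarrow> quat" where
  "qexp x = Q (\<Sum>m. c0 (x ^ m) / fact m) (\<Sum>m. c1 (x ^ m) / fact m)
              (\<Sum>m. c2 (x ^ m) / fact m) (\<Sum>m. c12 (x ^ m) / fact m)"

definition qcosh :: "quat \<Rightarrow> quat" where
  "qcosh x = qscale (1/2) (qexp x + qexp (- qrev x))"

definition qsinh :: "quat \<Rightarrow> quat" where
  "qsinh x = qscale (1/2) (qexp x - qexp (- qrev x))"

section \<open>Boundary of H^4: (R + R e1 + R e2) \<union> {\<infinity>}\<close>

datatype bpt = Fin real real real | Inf

fun pv :: "bpt \<Rightarrow> quat" where
  "pv (Fin a b c) = Q a b c 0"
| "pv Inf = 0"

definition of_pv :: "quat \<Rightarrow> bpt" where
  "of_pv q = Fin (c0 q) (c1 q) (c2 q)"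

section \<open>Vahlen matrices and Moebius maps (orientation-preserving isometries of H^4)\<close>

type_synonym vmat = "quat \<times> quat \<times> quat \<times> quat"  \<comment> \<open>(a,b,c,d) = [[a,b],[c,d]]\<close>

definition vahlen :: "vmat \<Rightarrow> bool" where
  "vahlen M = (case M of (a, b, c, d) \<Rightarrow>
     a * qrev d - b * qrev c = 1 \<and> c12 (a * qrev b) = 0 \<and> c12 (c * qrev d) = 0)"

text \<open>Boundary action x \<mapsto> (a x + b)(c x + d)^{-1}; an orientation-preserving isometry
  of H^4 is determined by its boundary action.\<close>
fun mob :: "vmat \<Rightarrow> bpt \<Rightarrow> bpt" where
  "mob (a, b, c, d) Inf = (if c = 0 then Inf else of_pv (a * qinv c))"
| "mob (a, b, c, d) (Fin x y z) =
     (let p = pv (Fin x y z); den = c * p + d in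
      if den = 0 then Inf else of_pv ((a * p + b) * qinv den))"

text \<open>Oriented geodesic = (initial endpoint, terminal endpoint).\<close>
type_synonym oline = "bpt \<times> bpt"

definition is_oline :: "oline \<Rightarrow> bool" where
  "is_oline L \<longleftrightarrow> fst L \<noteq> snd L"

text \<open>Oriented flag (L,\<Pi>) = (initial endpoint of L, terminal endpoint of L, A), where A is
  the open boundary arc (of the boundary circle of \<Pi>) bounding the half-plane of \<Pi> into
  which the second vector of a positive frame (tangent of L, normal) points.\<close>
type_synonym oflag = "bpt \<times> bpt \<times> bpt set"

definition Lv :: oline where "Lv = (Fin 0 0 0, Inf)"

text \<open>F_h = (L_{[-1,1]}, \<Pi>_h), \<Pi>_h oriented by (L_{[-1,1]}, L_{[-e1,e1]}): the half-plane
  is the one containing L_{[0,e1]}-direction, i.e. the arc of the unit circle with x1 > 0.\<close>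
definition Fh :: oflag where
  "Fh = (Fin (-1) 0 0, Fin 1 0 0, {Fin x y 0 | x y. x\<^sup>2 + y\<^sup>2 = 1 \<and> y > 0})"

definition line_img :: "(bpt \<Rightarrow> bpt) \<Rightarrow> oline \<Rightarrow> oline" where
  "line_img g L = (g (fst L), g (snd L))"

definition flag_img :: "(bpt \<Rightarrow> bpt) \<Rightarrow> oflag \<Rightarrow> oflag" where
  "flag_img g F = (case F of (u, v, A) \<Rightarrow> (g u, g v, g ` A))"

definition is_oflag :: "oflag \<Rightarrow> bool" where
  "is_oflag F \<longleftrightarrow> (\<exists>M. vahlen M \<and> flag_img (mob M) Fh = F)"

text \<open>A line L and a flag F are orthogonal iff, after moving F to F_h by an
  orientation-preserving isometry, L is a geodesic through the point e3 of L_{[-1,1]}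
  perpendicular to \<Pi>_h (x2 = 0), i.e. lying in the (x2,x3) vertical half-plane through e3:
  either L_{[0,\<infinity>]} or the semicircle with endpoints t e2, -(1/t) e2.\<close>
definition orth :: "oline \<Rightarrow> oflag \<Rightarrow> bool" where
  "orth L F \<longleftrightarrow> (\<exists>M. vahlen M \<and> flag_img (mob M) Fh = F \<and>
      ({fst L, snd L} = mob M ` {Fin 0 0 0, Inf} \<or>
       (\<exists>t. t \<noteq> 0 \<and> {fst L, snd L} = mob M ` {Fin 0 0 t, Fin 0 0 (- 1 / t)})))"

text \<open>{e1,e2}-quaternion half side-length \<delta>_n (n odd) of the side L_n between F_{n-1}, F_{n+1}:
  \<iota>(L_n) = L_v, \<iota>(F_{n-1}) = F_h; the isometry fixing L_v sending F_h to \<iota>(F_{n+1}) has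
  Vahlen matrix \<plusminus>diag(a, (a^*)^{-1}); \<delta> \<in> log(\<plusminus>a).\<close>
definition quat_hsl :: "oflag \<Rightarrow> oline \<Rightarrow> oflag \<Rightarrow> quat \<Rightarrow> bool" where
  "quat_hsl Fp L Fn \<delta> \<longleftrightarrow> (\<exists>Mi a.
      vahlen Mi \<and> line_img (mob Mi) L = Lv \<and> flag_img (mob Mi) Fp = Fh \<and>
      vahlen (a, 0, 0, qinv (qrev a)) \<and>
      line_img (mob (a, 0, 0, qinv (qrev a))) Lv = Lv \<and>
      flag_img (mob (a, 0, 0, qinv (qrev a))) Fh = flag_img (mob Mi) Fn \<and>
      (qexp \<delta> = a \<or> qexp \<delta> = - a))"

definition cplx_hsl :: "oline \<Rightarrow> oflag \<Rightarrow> oline \<Rightarrow> quat \<Rightarrow> bool" where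
  "cplx_hsl Lp F Ln \<delta> \<longleftrightarrow> c1 \<delta> = 0 \<and> c12 \<delta> = 0 \<and> (\<exists>Mi.
      vahlen Mi \<and> flag_img (mob Mi) F = Fh \<and> line_img (mob Mi) Lp = Lv \<and>
      vahlen (qcosh \<delta>, qsinh \<delta>, qsinh \<delta>, qcosh \<delta>) \<and>
      flag_img (mob (qcosh \<delta>, qsinh \<delta>, qsinh \<delta>, qcosh \<delta>)) Fh = Fh \<and>
      line_img (mob (qcosh \<delta>, qsinh \<delta>, qsinh \<delta>, qcosh \<delta>)) Lv = line_img (mob Mi) Ln)"

end

theory Submission
  imports Defs "HOL-Analysis.Analysis"
begin

text \<open>An oriented line together with an orthogonal oriented flag through it forms a frame, and
  the Vahlen matrices fixing the base frame (L_v, F_h) are exactly \<plusminus>I, so a frame determines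
  the Vahlen matrix normalising it up to sign. Each half side-length describes the passage between
  consecutive frames of the hexagon, (L_n, F_{n-1}) to (L_n, F_{n+1}) for odd n and
  (L_{n-1}, F_n) to (L_{n+1}, F_n) for even n, by the matrix diag(exp \<delta>, exp(-\<delta>^*)) resp.
  [[cosh \<delta>, sinh \<delta>], [sinh \<delta>, cosh \<delta>]]. Going once around the hexagon returns to the first
  frame, so the product of the six matrices is \<plusminus>I. Hence D_1 C_2 D_3 = \<plusminus>adj(C_4 D_5 C_6), and the
  four identities are half sums and differences of entries of this matrix relation.\<close>

section \<open>The algebra A_2 as a normed division algebra\<close>

lemma quat_eq_iff: "x = y \<longleftrightarrow> c0 x = c0 y \<and> c1 x = c1 y \<and> c2 x = c2 y \<and> c12 x = c12 y"
  by (cases x; cases y) auto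

lemma quat_components [simp]:
  "c0 0 = 0" "c1 0 = 0" "c2 0 = 0" "c12 0 = 0"
  "c0 1 = 1" "c1 1 = 0" "c2 1 = 0" "c12 1 = 0"
  "c0 (x + y) = c0 x + c0 y" "c1 (x + y) = c1 x + c1 y"
  "c2 (x + y) = c2 x + c2 y" "c12 (x + y) = c12 x + c12 y"
  "c0 (x - y) = c0 x - c0 y" "c1 (x - y) = c1 x - c1 y"
  "c2 (x - y) = c2 x - c2 y" "c12 (x - y) = c12 x - c12 y"
  "c0 (- x) = - c0 x" "c1 (- x) = - c1 x" "c2 (- x) = - c2 x" "c12 (- x) = - c12 x"
  "c0 (x * y) = c0 x * c0 y - c1 x * c1 y - c2 x * c2 y - c12 x * c12 y"
  "c1 (x * y) = c0 x * c1 y + c1 x * c0 y + c2 x * c12 y - c12 x * c2 y"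
  "c2 (x * y) = c0 x * c2 y - c1 x * c12 y + c2 x * c0 y + c12 x * c1 y"
  "c12 (x * y) = c0 x * c12 y + c1 x * c2 y - c2 x * c1 y + c12 x * c0 y"
  by (simp_all add: zero_quat_def one_quat_def plus_quat_def minus_quat_def uminus_quat_def
      times_quat_def)

instance quat :: ring_1
  by standard (simp_all add: quat_eq_iff algebra_simps)

instantiation quat :: real_vector
begin

definition "r *\<^sub>R x = Q (r * c0 x) (r * c1 x) (r * c2 x) (r * c12 x)"

instance
  by standard (simp_all add: quat_eq_iff scaleR_quat_def algebra_simps)

end

lemma scaleR_quat_components [simp]:
  "c0 (r *\<^sub>R x) = r * c0 x" "c1 (r *\<^sub>R x) = r * c1 x"
  "c2 (r *\<^sub>R x) = r * c2 x" "c12 (r *\<^sub>R x) = r * c12 x"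
  by (simp_all add: scaleR_quat_def)

instantiation quat :: euclidean_space
begin

definition "inner x y = c0 x * c0 y + c1 x * c1 y + c2 x * c2 y + c12 x * c12 y"
definition "norm (x :: quat) = sqrt (inner x x)"
definition "sgn (x :: quat) = x /\<^sub>R norm x"
definition "dist (x :: quat) y = norm (x - y)"
definition "(uniformity :: (quat \<times> quat) filter) = (INF e\<in>{0<..}. principal {(x, y). dist x y < e})"
definition "open (U :: quat set) \<longleftrightarrow> (\<forall>x\<in>U. eventually (\<lambda>(x', y). x' = x \<longrightarrow> y \<in> U) uniformity)"
definition "Basis = {Q 1 0 0 0, Q 0 1 0 0, Q 0 0 1 0, Q 0 0 0 1}"

instance
proof
  fix x :: quat
  show "inner x x = 0 \<longleftrightarrow> x = 0"
    by (simp add: inner_quat_def quat_eq_iff add_nonneg_eq_0_iff)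
  show "(\<forall>u\<in>Basis. inner x u = 0) \<longleftrightarrow> x = 0"
    by (simp add: Basis_quat_def inner_quat_def) (simp add: quat_eq_iff)
qed (auto simp: quat_eq_iff algebra_simps inner_quat_def norm_quat_def sgn_quat_def
    dist_quat_def uniformity_quat_def open_quat_def Basis_quat_def)

end

lemma norm_quat_mult: "norm (x * y) = norm x * norm (y :: quat)"
  unfolding norm_quat_def real_sqrt_mult[symmetric]
  by (rule arg_cong[where f = sqrt]) (simp add: inner_quat_def power2_eq_square algebra_simps)

instance quat :: real_normed_algebra_1
  by standard
    (simp_all add: quat_eq_iff algebra_simps norm_quat_mult, simp add: norm_quat_def inner_quat_def)

instantiation quat :: real_normed_div_algebra
begin

definition "inverse (x :: quat) = qinv x"
definition "divide (x :: quat) y = x * qinv y"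

instance
proof
  fix x y :: quat and r :: real
  show "x \<noteq> 0 \<Longrightarrow> inverse x * x = 1" "x \<noteq> 0 \<Longrightarrow> x * inverse x = 1"
  proof -
    assume "x \<noteq> 0"
    define n where "n = (c0 x)\<^sup>2 + (c1 x)\<^sup>2 + (c2 x)\<^sup>2 + (c12 x)\<^sup>2"
    define x' where "x' = Q (c0 x) (- c1 x) (- c2 x) (- c12 x)"
    have "n \<noteq> 0"
      using \<open>x \<noteq> 0\<close> inner_eq_zero_iff[of x] by (simp add: n_def inner_quat_def power2_eq_square)
    moreover have "inverse x = (1 / n) *\<^sub>R x'"
      by (simp add: inverse_quat_def qinv_def Let_def n_def x'_def quat_eq_iff)
    moreover have "x' * x = n *\<^sub>R 1" "x * x' = n *\<^sub>R 1"
      by (simp_all add: quat_eq_iff x'_def n_def power2_eq_square algebra_simps)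
    ultimately show "inverse x * x = 1" "x * inverse x = 1"
      by simp_all
  qed
  show "norm (x * y) = norm x * norm y"
    by (rule norm_quat_mult)
qed (simp_all add: inverse_quat_def divide_quat_def qinv_def quat_eq_iff)

end

lemma bounded_linear_quat_components:
  "bounded_linear c0" "bounded_linear c1" "bounded_linear c2" "bounded_linear c12"
proof -
  have "c0 = (\<lambda>x. inner x (Q 1 0 0 0))" "c1 = (\<lambda>x. inner x (Q 0 1 0 0))"
    "c2 = (\<lambda>x. inner x (Q 0 0 1 0))" "c12 = (\<lambda>x. inner x (Q 0 0 0 1))"
    by (simp_all add: fun_eq_iff inner_quat_def)
  then show "bounded_linear c0" "bounded_linear c1" "bounded_linear c2" "bounded_linear c12"
    by (metis bounded_linear_inner_left)+
qed

lemma bounded_linear_suminf_exp: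
  "bounded_linear f \<Longrightarrow> f (exp x) = (\<Sum>n. f (inverse (fact n) *\<^sub>R x ^ n))"
  unfolding exp_def by (rule bounded_linear.suminf[OF _ summable_exp_generic])

lemma qexp_eq_exp: "qexp x = exp x"
  by (simp add: qexp_def quat_eq_iff bounded_linear_suminf_exp bounded_linear_quat_components
      divide_inverse mult.commute)

lemma qrev_components [simp]:
  "c0 (qrev x) = c0 x" "c1 (qrev x) = c1 x" "c2 (qrev x) = c2 x" "c12 (qrev x) = - c12 x"
  by (simp_all add: qrev_def)

lemma qrev_eq_iff_c12: "qrev x = x \<longleftrightarrow> c12 x = 0"
  by (simp add: quat_eq_iff)

lemma qrev_mult: "qrev (x * y) = qrev y * qrev x"
  and qrev_add [simp]: "qrev (x + y) = qrev x + qrev y"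
  and qrev_diff [simp]: "qrev (x - y) = qrev x - qrev y"
  and qrev_minus [simp]: "qrev (- x) = - qrev x"
  and qrev_scaleR [simp]: "qrev (r *\<^sub>R x) = r *\<^sub>R qrev x"
  and qrev_one [simp]: "qrev 1 = 1"
  and qrev_qrev [simp]: "qrev (qrev x) = x"
  and qrev_eq_0_iff [simp]: "qrev x = 0 \<longleftrightarrow> x = 0"
  by (simp_all add: quat_eq_iff)

lemma qrev_power: "qrev (x ^ n) = qrev x ^ n"
  by (induction n) (simp_all add: qrev_mult power_commutes)

lemma qrev_exp: "qrev (exp x) = exp (qrev x)"
proof -
  have "bounded_linear qrev"
    by (rule bounded_linear_intro[where K = 1]) (simp_all add: norm_quat_def inner_quat_def)
  then show ?thesis
    by (simp add: bounded_linear_suminf_exp qrev_power) (simp add: exp_def)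
qed

lemma inverse_qrev_qexp: "inverse (qrev (qexp x)) = qexp (- qrev x)"
  by (simp add: qexp_eq_exp qrev_exp exp_minus_inverse inverse_unique)

lemma qcosh_add_qsinh: "qcosh x + qsinh x = qexp x"
  and qcosh_diff_qsinh: "qcosh x - qsinh x = qexp (- qrev x)"
  by (simp_all add: quat_eq_iff qcosh_def qsinh_def qscale_def field_simps)

lemma qinv_eq_inverse: "qinv = inverse"
  by (simp add: fun_eq_iff inverse_quat_def)

lemma qrev_inverse: "qrev (inverse x) = inverse (qrev x)"
  by (simp add: inverse_quat_def qinv_def Let_def quat_eq_iff)

lemma c0_mult_commute: "c0 (x * y) = c0 (y * x)"
  by simp

section \<open>Vahlen matrices\<close>

fun vmat_mult :: "vmat \<Rightarrow> vmat \<Rightarrow> vmat" where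
  "vmat_mult (a, b, c, d) (a', b', c', d') =
     (a * a' + b * c', a * b' + b * d', c * a' + d * c', c * b' + d * d')"

fun vmat_adj :: "vmat \<Rightarrow> vmat" where
  "vmat_adj (a, b, c, d) = (qrev d, - qrev b, - qrev c, qrev a)"

definition vmat_one :: vmat where "vmat_one = (1, 0, 0, 1)"

lemma vmat_mult_assoc: "vmat_mult (vmat_mult A B) C = vmat_mult A (vmat_mult B C)"
  by (cases A rule: prod_cases4; cases B rule: prod_cases4; cases C rule: prod_cases4)
    (simp add: algebra_simps)

lemma vmat_mult_one [simp]: "vmat_mult vmat_one A = A" "vmat_mult A vmat_one = A"
  by (cases A rule: prod_cases4; simp add: vmat_one_def)+

lemma vmat_adj_mult: "vmat_adj (vmat_mult A B) = vmat_mult (vmat_adj B) (vmat_adj A)"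
  by (cases A rule: prod_cases4; cases B rule: prod_cases4) (simp add: algebra_simps qrev_mult)

lemma vmat_mult_minus [simp]:
  "vmat_mult (- A) B = - vmat_mult A B" "vmat_mult A (- B) = - vmat_mult A B"
  by (cases A rule: prod_cases4; cases B rule: prod_cases4; simp)+

lemma vmat_adj_minus [simp]: "vmat_adj (- A) = - vmat_adj A"
  by (cases A rule: prod_cases4) simp

lemma vmat_adj_adj [simp]: "vmat_adj (vmat_adj A) = A"
  by (cases A rule: prod_cases4) simp

lemma vahlen_iff_mult_adj: "vahlen M \<longleftrightarrow> vmat_mult M (vmat_adj M) = vmat_one"
proof (cases M rule: prod_cases4)
  case (fields a b c d)
  have "c12 (x * qrev y) = 0 \<longleftrightarrow> x * qrev y = y * qrev x" for x y
    using qrev_eq_iff_c12[of "x * qrev y"] by (auto simp: qrev_mult)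
  moreover have "a * qrev d - b * qrev c = 1 \<Longrightarrow> d * qrev a - c * qrev b = 1"
    by (metis qrev_diff qrev_mult qrev_one qrev_qrev)
  ultimately show ?thesis
    using fields by (auto simp: vahlen_def vmat_one_def)
qed

text \<open>The 2x2 matrices over A_2 form a 16-dimensional real algebra, in which a one-sided
  inverse is two-sided: left multiplication by B is injective, hence surjective.\<close>
lemma vmat_mult_eq_one_commute:
  assumes AB: "vmat_mult A B = vmat_one"
  shows "vmat_mult B A = vmat_one"
proof -
  have "linear (vmat_mult B)"
  proof (rule linearI)
    fix X Y :: vmat and r :: real
    show "vmat_mult B (X + Y) = vmat_mult B X + vmat_mult B Y"
      by (cases B rule: prod_cases4; cases X rule: prod_cases4; cases Y rule: prod_cases4)
        (simp add: algebra_simps)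
    show "vmat_mult B (r *\<^sub>R X) = r *\<^sub>R vmat_mult B X"
      by (cases B rule: prod_cases4; cases X rule: prod_cases4) (simp add: algebra_simps)
  qed
  moreover have "inj (vmat_mult B)"
    by (rule inj_on_inverseI[where g = "vmat_mult A"]) (simp add: vmat_mult_assoc[symmetric] AB)
  ultimately obtain X where X: "vmat_mult B X = vmat_one"
    by (metis linear_injective_imp_surjective surjE)
  have "A = X"
    by (metis AB X vmat_mult_assoc vmat_mult_one)
  with X show ?thesis by simp
qed

lemma vahlen_adj_mult: "vahlen M \<Longrightarrow> vmat_mult (vmat_adj M) M = vmat_one"
  by (simp add: vahlen_iff_mult_adj vmat_mult_eq_one_commute)

lemma vahlen_adj: "vahlen M \<Longrightarrow> vahlen (vmat_adj M)"
  by (simp add: vahlen_iff_mult_adj vahlen_adj_mult)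

lemma vahlen_mult: "vahlen A \<Longrightarrow> vahlen B \<Longrightarrow> vahlen (vmat_mult A B)"
  unfolding vahlen_iff_mult_adj vmat_adj_mult by (metis vmat_mult_assoc vmat_mult_one)

lemma vahlen_minus [simp]: "vahlen (- M) \<longleftrightarrow> vahlen M"
  by (simp add: vahlen_iff_mult_adj)

lemma vahlen_mult_cancel:
  assumes "vahlen M"
  shows "vmat_mult M (vmat_adj M) = vmat_one" "vmat_mult (vmat_adj M) M = vmat_one"
    "vmat_mult M (vmat_mult (vmat_adj M) A) = A" "vmat_mult (vmat_adj M) (vmat_mult M A) = A"
  using assms by (simp_all add: vahlen_iff_mult_adj vahlen_adj_mult flip: vmat_mult_assoc)

section \<open>The M\<ouml>bius action in homogeneous coordinates\<close>

fun vmat_vec :: "vmat \<Rightarrow> quat \<times> quat \<Rightarrow> quat \<times> quat" where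
  "vmat_vec (a, b, c, d) (s, t) = (a * s + b * t, c * s + d * t)"

fun bpt_of_pair :: "quat \<times> quat \<Rightarrow> bpt" where
  "bpt_of_pair (u, v) = (if v = 0 then Inf else of_pv (u * inverse v))"

fun pair_of_bpt :: "bpt \<Rightarrow> quat \<times> quat" where
  "pair_of_bpt Inf = (1, 0)"
| "pair_of_bpt x = (pv x, 1)"

lemma vmat_vec_mult: "vmat_vec (vmat_mult M N) p = vmat_vec M (vmat_vec N p)"
  by (cases M rule: prod_cases4; cases N rule: prod_cases4; cases p) (simp add: algebra_simps)

lemma vmat_vec_one [simp]: "vmat_vec vmat_one p = p"
  by (cases p) (simp add: vmat_one_def)

lemma mob_eq_bpt_of_pair: "mob M x = bpt_of_pair (vmat_vec M (pair_of_bpt x))"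
  by (cases M rule: prod_cases4; cases x) (simp_all add: qinv_eq_inverse Let_def)

lemma bpt_of_pair_mult_right:
  assumes "s \<noteq> 0"
  shows "bpt_of_pair (u * s, v * s) = bpt_of_pair (u, v)"
proof -
  have "u * s * inverse (v * s) = u * inverse v" if "v \<noteq> 0"
    using assms that by (simp add: nonzero_inverse_mult_distrib mult.assoc[symmetric])
      (simp add: mult.assoc)
  then show ?thesis using assms by simp
qed

text \<open>The left-hand side is the quaternionic symplectic form of the column vector (u, v).\<close>
lemma vahlen_vmat_vec_symplectic:
  assumes M: "vahlen M" and uv: "vmat_vec M (s, t) = (u, v)"
  shows "qrev v * u - qrev u * v = qrev t * s - qrev s * t"
proof (cases M rule: prod_cases4)
  case (fields a b c d)
  from vahlen_adj_mult[OF M] fields have rel: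
    "qrev c * a - qrev a * c = 0" "qrev c * b - qrev a * d = - 1"
    "qrev d * a - qrev b * c = 1" "qrev d * b - qrev b * d = 0"
    by (auto simp: vmat_one_def algebra_simps)
  from uv fields have "u = a * s + b * t" "v = c * s + d * t" by auto
  then have "qrev v * u - qrev u * v =
      qrev s * (qrev c * a - qrev a * c) * s + qrev s * (qrev c * b - qrev a * d) * t
    + qrev t * (qrev d * a - qrev b * c) * s + qrev t * (qrev d * b - qrev b * d) * t"
    by (simp add: qrev_mult algebra_simps)
  then show ?thesis by (simp add: rel algebra_simps)
qed

lemma c12_mult_inverse_eq_0:
  assumes "qrev v * u = qrev u * v" and "v \<noteq> 0"
  shows "c12 (u * inverse v) = 0"
proof -
  have "u * inverse v = inverse (qrev v) * (qrev v * u) * qrev (inverse (qrev v))"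
    using assms(2) by (simp add: qrev_inverse mult.assoc[symmetric])
  then have "qrev (u * inverse v) = u * inverse v"
    using assms by (simp add: qrev_mult qrev_inverse mult.assoc)
  then show ?thesis by (simp add: qrev_eq_iff_c12)
qed

text \<open>Isotropic pairs are the homogeneous coordinates of boundary points: for v \<noteq> 0 the
  point u v^{-1} is then a paravector.\<close>
definition isotropic :: "quat \<times> quat \<Rightarrow> bool" where
  "isotropic p \<longleftrightarrow> qrev (snd p) * fst p = qrev (fst p) * snd p"

lemma isotropic_pair_of_bpt: "isotropic (pair_of_bpt x)"
  by (cases x) (simp_all add: isotropic_def quat_eq_iff)

lemma pair_of_bpt_nonzero: "pair_of_bpt x \<noteq> (0, 0)"
  by (cases x) simp_all

lemma vahlen_isotropic: "vahlen M \<Longrightarrow> isotropic p \<Longrightarrow> isotropic (vmat_vec M p)"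
  using vahlen_vmat_vec_symplectic[of M "fst p" "snd p"] by (auto simp: isotropic_def)

lemma vahlen_vmat_vec_nonzero:
  assumes "vahlen M" and "p \<noteq> (0, 0)"
  shows "vmat_vec M p \<noteq> (0, 0)"
proof
  assume "vmat_vec M p = (0, 0)"
  then have "vmat_vec (vmat_mult (vmat_adj M) M) p = vmat_vec (vmat_adj M) (0, 0)"
    by (simp add: vmat_vec_mult)
  also have "\<dots> = (0, 0)"
    by (cases M rule: prod_cases4) simp
  finally show False
    using assms by (simp add: vahlen_adj_mult)
qed

lemma vmat_vec_mult_right:
  "vmat_vec M (x * s, y * s) = (fst (vmat_vec M (x, y)) * s, snd (vmat_vec M (x, y)) * s)"
  by (cases M rule: prod_cases4) (simp add: algebra_simps)

lemma pair_of_bpt_of_pair: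
  assumes "p \<noteq> (0, 0)" and "isotropic p"
  obtains s where "s \<noteq> 0"
    and "p = (fst (pair_of_bpt (bpt_of_pair p)) * s, snd (pair_of_bpt (bpt_of_pair p)) * s)"
proof (cases p)
  case (Pair u v)
  show ?thesis
  proof (cases "v = 0")
    case True
    with Pair assms(1) show ?thesis by (intro that[of u]) auto
  next
    case False
    with Pair assms(2) have "c12 (u * inverse v) = 0"
      by (intro c12_mult_inverse_eq_0) (auto simp: isotropic_def)
    then have "pair_of_bpt (bpt_of_pair p) = (u * inverse v, 1)"
      using False Pair by (simp add: of_pv_def quat_eq_iff)
    with Pair False show ?thesis by (intro that[of v]) (simp_all add: mult.assoc)
  qed
qed

lemma mob_bpt_of_pair:
  assumes "p \<noteq> (0, 0)" and "isotropic p"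
  shows "mob M (bpt_of_pair p) = bpt_of_pair (vmat_vec M p)"
proof -
  obtain s where s: "s \<noteq> 0"
    and p: "p = (fst (pair_of_bpt (bpt_of_pair p)) * s, snd (pair_of_bpt (bpt_of_pair p)) * s)"
    using pair_of_bpt_of_pair[OF assms] .
  have "bpt_of_pair (vmat_vec M p) = bpt_of_pair (vmat_vec M (pair_of_bpt (bpt_of_pair p)))"
    by (subst p, subst vmat_vec_mult_right) (metis bpt_of_pair_mult_right prod.collapse s)
  then show ?thesis by (simp add: mob_eq_bpt_of_pair)
qed

lemma mob_vmat_mult:
  assumes "vahlen N"
  shows "mob (vmat_mult M N) = mob M \<circ> mob N"
proof
  fix x
  let ?p = "vmat_vec N (pair_of_bpt x)"
  have "?p \<noteq> (0, 0)" "isotropic ?p"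
    using assms by (simp_all add: vahlen_vmat_vec_nonzero pair_of_bpt_nonzero vahlen_isotropic
        isotropic_pair_of_bpt)
  then have "mob M (bpt_of_pair ?p) = bpt_of_pair (vmat_vec M ?p)"
    by (rule mob_bpt_of_pair)
  then show "mob (vmat_mult M N) x = (mob M \<circ> mob N) x"
    by (simp only: comp_apply mob_eq_bpt_of_pair[of _ x] vmat_vec_mult)
qed

lemma bpt_of_pair_of_bpt [simp]: "bpt_of_pair (pair_of_bpt x) = x"
  by (cases x) (simp_all add: of_pv_def)

lemma mob_vmat_one [simp]: "mob vmat_one = id"
  by (simp add: fun_eq_iff mob_eq_bpt_of_pair)

lemma mob_minus [simp]: "mob (- M) = mob M"
proof -
  have "bpt_of_pair (vmat_vec (- M) p) = bpt_of_pair (vmat_vec M p)" for p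
    using bpt_of_pair_mult_right[of "- 1" "fst (vmat_vec M p)" "snd (vmat_vec M p)"]
    by (cases M rule: prod_cases4; cases p) simp
  then show ?thesis
    by (simp add: fun_eq_iff mob_eq_bpt_of_pair)
qed

lemma mob_vmat_adj_comp: "vahlen M \<Longrightarrow> mob (vmat_adj M) \<circ> mob M = id"
  by (simp flip: mob_vmat_mult add: vahlen_adj_mult)

lemma of_pv_neq_Inf [simp]: "of_pv q \<noteq> Inf" "Inf \<noteq> of_pv q"
  by (simp_all add: of_pv_def)

lemma pair_of_bpt_of_pv: "c12 q = 0 \<Longrightarrow> pair_of_bpt (of_pv q) = (q, 1)"
  by (simp add: of_pv_def quat_eq_iff)

lemma mob_of_pv_eq_of_pv:
  assumes M: "vahlen M" and q: "c12 q = 0" and r: "c12 r = 0"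
    and img: "mob M (of_pv q) = of_pv r" and uv: "vmat_vec M (q, 1) = (u, v)"
  shows "v \<noteq> 0" and "u = r * v"
proof -
  have "bpt_of_pair (u, v) = of_pv r"
    using img uv q by (simp add: mob_eq_bpt_of_pair pair_of_bpt_of_pv)
  then have v: "v \<noteq> 0" and "of_pv (u * inverse v) = of_pv r"
    by (auto split: if_splits)
  then show "v \<noteq> 0" by blast
  have "isotropic (u, v)"
    using uv q vahlen_isotropic[OF M, of "(q, 1)"] by (simp add: isotropic_def quat_eq_iff)
  then have "c12 (u * inverse v) = 0"
    using v by (intro c12_mult_inverse_eq_0) (simp_all add: isotropic_def)
  with \<open>of_pv (u * inverse v) = of_pv r\<close> have "u * inverse v = r"
    using r by (simp add: of_pv_def quat_eq_iff)
  then show "u = r * v"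
    using v by (auto simp: mult.assoc)
qed

section \<open>Frames\<close>

type_synonym frame = "oline \<times> oflag"

definition frame_img :: "(bpt \<Rightarrow> bpt) \<Rightarrow> frame \<Rightarrow> frame" where
  "frame_img g \<Phi> = (line_img g (fst \<Phi>), flag_img g (snd \<Phi>))"

definition base_frame :: frame where "base_frame = (Lv, Fh)"

lemma frame_img_comp: "frame_img (f \<circ> g) \<Phi> = frame_img f (frame_img g \<Phi>)"
  by (simp add: frame_img_def line_img_def flag_img_def image_comp split: prod.split)

lemma frame_img_id [simp]: "frame_img id \<Phi> = \<Phi>"
  by (simp add: frame_img_def line_img_def flag_img_def split: prod.split)

lemma vahlen_fixing_0_1_Inf:
  assumes M: "vahlen M" and "mob M Inf = Inf"
    and "mob M (of_pv 0) = of_pv 0" and "mob M (of_pv 1) = of_pv 1"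
  obtains a where "M = (a, 0, 0, a)" and "a * qrev a = 1"
proof -
  obtain a b c d where Md: "M = (a, b, c, d)" by (cases M rule: prod_cases4)
  from \<open>mob M Inf = Inf\<close> have c: "c = 0"
    by (simp add: Md split: if_splits)
  from mob_of_pv_eq_of_pv[OF M _ _ \<open>mob M (of_pv 0) = of_pv 0\<close>] have b: "b = 0"
    by (simp add: Md)
  from mob_of_pv_eq_of_pv[OF M _ _ \<open>mob M (of_pv 1) = of_pv 1\<close>] have "a = d"
    by (simp add: Md b c)
  with M show ?thesis
    by (intro that[of a]) (simp_all add: Md b c vahlen_def)
qed

text \<open>The image of e1 is a e1 a^{-1}, whose real part vanishes; on the arc this forces it to be
  e1 itself, so a commutes with e1.\<close>
lemma vahlen_diag_e1_to_arc:
  assumes M: "vahlen (a, 0, 0, a)" and unit: "a * qrev a = 1"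
    and img: "mob (a, 0, 0, a) (Fin 0 1 0) = Fin x y 0" and "x\<^sup>2 + y\<^sup>2 = 1" and "y > 0"
  shows "a = 1 \<or> a = - 1"
proof -
  define e1 where "e1 = Q 0 1 0 0"
  have "mob (a, 0, 0, a) (of_pv e1) = of_pv (Q x y 0 0)"
    using img by (simp add: of_pv_def e1_def)
  from mob_of_pv_eq_of_pv[OF M _ _ this] have a: "a \<noteq> 0" and conj: "a * e1 = Q x y 0 0 * a"
    by (simp_all add: e1_def)
  have "x = c0 (a * e1 * inverse a)"
    using a by (simp add: conj mult.assoc del: quat_components)
  also have "\<dots> = c0 (inverse a * (a * e1))"
    by (rule c0_mult_commute)
  also have "\<dots> = 0"
    using a by (simp add: mult.assoc[symmetric] e1_def del: quat_components)
  finally have "x = 0" .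
  with assms(4,5) have "y = 1"
    by (simp add: power2_eq_1_iff)
  with \<open>x = 0\<close> conj have "c2 a = 0" "c12 a = 0"
    by (simp_all add: quat_eq_iff e1_def)
  then have "a * a = 1"
    using unit by (simp add: qrev_eq_iff_c12[symmetric])
  then show ?thesis
    by (simp add: square_eq_1_iff)
qed

lemma vahlen_stabilizer_base_frame:
  assumes M: "vahlen M" and fixed: "frame_img (mob M) base_frame = base_frame"
  shows "M = vmat_one \<or> M = - vmat_one"
proof -
  have fin: "Fin 0 0 0 = of_pv 0" "Fin 1 0 0 = of_pv 1"
    by (simp_all add: of_pv_def)
  define arc where "arc = {Fin x y 0 | x y :: real. x\<^sup>2 + y\<^sup>2 = 1 \<and> y > 0}"
  have "mob M Inf = Inf" "mob M (of_pv 0) = of_pv 0" "mob M (of_pv 1) = of_pv 1"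
    and arc: "mob M ` arc = arc"
    using fixed by (simp_all add: frame_img_def base_frame_def line_img_def Lv_def flag_img_def
        Fh_def fin arc_def)
  then obtain a where Ma: "M = (a, 0, 0, a)" and unit: "a * qrev a = 1"
    using vahlen_fixing_0_1_Inf[OF M] by blast
  have "Fin 0 1 0 \<in> arc"
    by (force simp: arc_def)
  with arc have "mob M (Fin 0 1 0) \<in> arc"
    by blast
  then obtain x y where "mob M (Fin 0 1 0) = Fin x y 0" "x\<^sup>2 + y\<^sup>2 = 1" "y > 0"
    by (auto simp: arc_def)
  with M unit have "a = 1 \<or> a = - 1"
    unfolding Ma by (rule vahlen_diag_e1_to_arc)
  then show ?thesis
    by (auto simp: Ma vmat_one_def)
qed

lemma vahlen_agree_on_frame:
  assumes X: "vahlen X" and Y: "vahlen Y" and N: "vahlen N"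
    and agree: "frame_img (mob X) \<Phi> = frame_img (mob Y) \<Phi>"
    and \<Phi>: "\<Phi> = frame_img (mob N) base_frame"
  shows "X = Y \<or> X = - Y"
proof -
  define Z where "Z = vmat_mult (vmat_adj N) (vmat_mult (vmat_adj Y) (vmat_mult X N))"
  have Z: "vahlen Z"
    using X Y N by (simp add: Z_def vahlen_mult vahlen_adj)
  have "frame_img (mob Z) base_frame
      = frame_img (mob (vmat_adj N)) (frame_img (mob (vmat_adj Y)) (frame_img (mob X) \<Phi>))"
    using X Y N by (simp add: Z_def \<Phi> mob_vmat_mult vahlen_mult vahlen_adj frame_img_comp)
  also have "\<dots> = frame_img (mob (vmat_adj N)) (frame_img (mob (vmat_adj Y) \<circ> mob Y) \<Phi>)"
    by (simp add: agree frame_img_comp)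
  also have "\<dots> = frame_img (mob (vmat_adj N) \<circ> mob N) base_frame"
    using Y by (simp add: mob_vmat_adj_comp \<Phi> frame_img_comp)
  also have "\<dots> = base_frame"
    using N by (simp add: mob_vmat_adj_comp)
  finally have "Z = vmat_one \<or> Z = - vmat_one"
    by (rule vahlen_stabilizer_base_frame[OF Z])
  moreover have "X = vmat_mult Y (vmat_mult N (vmat_mult Z (vmat_adj N)))"
    using Y N by (simp add: Z_def vmat_mult_assoc vahlen_mult_cancel)
  ultimately show ?thesis
    using N by (auto simp: vahlen_mult_cancel)
qed

text \<open>D is the matrix of the frame \<Psi> relative to \<Phi>: an isometry normalising \<Phi> carries \<Psi> to
  the image of the base frame under D.\<close>
definition frame_transition :: "frame \<Rightarrow> frame \<Rightarrow> vmat \<Rightarrow> bool" where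
  "frame_transition \<Phi> \<Psi> D \<longleftrightarrow> vahlen D \<and> (\<exists>M. vahlen M \<and>
     frame_img (mob M) \<Phi> = base_frame \<and> frame_img (mob M) \<Psi> = frame_img (mob D) base_frame)"

lemma frame_transition_minus [simp]: "frame_transition \<Phi> \<Psi> (- D) \<longleftrightarrow> frame_transition \<Phi> \<Psi> D"
  by (simp add: frame_transition_def)

lemma frame_transition_trans:
  assumes "frame_transition \<Phi> \<Psi> D" and "frame_transition \<Psi> \<Theta> D'"
  shows "frame_transition \<Phi> \<Theta> (vmat_mult D D')"
proof -
  obtain M where D: "vahlen D" and M: "vahlen M" and "frame_img (mob M) \<Phi> = base_frame"
    and M\<Psi>: "frame_img (mob M) \<Psi> = frame_img (mob D) base_frame"
    using assms(1) by (auto simp: frame_transition_def)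
  obtain M' where D': "vahlen D'" and M': "vahlen M'" and M'\<Psi>: "frame_img (mob M') \<Psi> = base_frame"
    and "frame_img (mob M') \<Theta> = frame_img (mob D') base_frame"
    using assms(2) by (auto simp: frame_transition_def)
  have \<Psi>: "\<Psi> = frame_img (mob (vmat_mult (vmat_adj M) D)) base_frame"
    using M D by (simp add: mob_vmat_mult frame_img_comp flip: M\<Psi>)
      (simp add: mob_vmat_adj_comp flip: frame_img_comp)
  have "frame_img (mob M) \<Psi> = frame_img (mob (vmat_mult D M')) \<Psi>"
    using M' by (simp add: mob_vmat_mult frame_img_comp M'\<Psi> M\<Psi>)
  then have "mob M = mob D \<circ> mob M'"
    using vahlen_agree_on_frame[OF M vahlen_mult[OF D M'] _ _ \<Psi>] M D M'
    by (auto simp: vahlen_mult vahlen_adj mob_vmat_mult)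
  then have "frame_img (mob M) \<Theta> = frame_img (mob (vmat_mult D D')) base_frame"
    using D' \<open>frame_img (mob M') \<Theta> = _\<close> by (simp add: mob_vmat_mult frame_img_comp)
  then show ?thesis
    using M D D' \<open>frame_img (mob M) \<Phi> = base_frame\<close>
    unfolding frame_transition_def by (blast intro: vahlen_mult)
qed

lemma frame_transition_cycle:
  assumes "frame_transition \<Phi> \<Phi> P"
  shows "P = vmat_one \<or> P = - vmat_one"
proof -
  from assms have "vahlen P" and "frame_img (mob P) base_frame = base_frame"
    by (auto simp: frame_transition_def)
  then show ?thesis
    by (rule vahlen_stabilizer_base_frame)
qed

lemma frame_transition_back:
  assumes "frame_transition \<Phi> \<Psi> A" and "frame_transition \<Psi> \<Phi> B"
  shows "A = vmat_adj B \<or> A = - vmat_adj B"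
proof -
  have "vmat_mult A B = vmat_one \<or> vmat_mult A B = - vmat_one"
    using frame_transition_cycle[OF frame_transition_trans[OF assms]] .
  moreover have "A = vmat_mult (vmat_mult A B) (vmat_adj B)"
    using assms(2) by (simp add: frame_transition_def vmat_mult_assoc vahlen_mult_cancel)
  ultimately show ?thesis
    by auto
qed

section \<open>The hexagon\<close>

definition diag_exp_vmat :: "quat \<Rightarrow> vmat" where
  "diag_exp_vmat \<delta> = (qcosh \<delta> + qsinh \<delta>, 0, 0, qcosh \<delta> - qsinh \<delta>)"

definition cosh_vmat :: "quat \<Rightarrow> vmat" where
  "cosh_vmat \<delta> = (qcosh \<delta>, qsinh \<delta>, qsinh \<delta>, qcosh \<delta>)"

lemma quat_hsl_frame_transition:
  assumes "quat_hsl F L F' \<delta>"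
  shows "frame_transition (L, F) (L, F') (diag_exp_vmat \<delta>)"
proof -
  obtain M a where "vahlen M" "line_img (mob M) L = Lv" "flag_img (mob M) F = Fh"
    and A: "vahlen (a, 0, 0, qinv (qrev a))" "line_img (mob (a, 0, 0, qinv (qrev a))) Lv = Lv"
      "flag_img (mob (a, 0, 0, qinv (qrev a))) Fh = flag_img (mob M) F'"
    and a: "qexp \<delta> = a \<or> qexp \<delta> = - a"
    using assms unfolding quat_hsl_def by blast
  then have "frame_img (mob M) (L, F) = base_frame"
    "frame_img (mob M) (L, F') = frame_img (mob (a, 0, 0, qinv (qrev a))) base_frame"
    by (simp_all add: frame_img_def base_frame_def)
  with \<open>vahlen M\<close> A(1) have "frame_transition (L, F) (L, F') (a, 0, 0, qinv (qrev a))"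
    unfolding frame_transition_def by blast
  moreover have "diag_exp_vmat \<delta> = (a, 0, 0, qinv (qrev a)) \<or> diag_exp_vmat \<delta> = - (a, 0, 0, qinv (qrev a))"
    using a by (auto simp: diag_exp_vmat_def qcosh_add_qsinh qcosh_diff_qsinh qinv_eq_inverse
        simp flip: inverse_qrev_qexp)
  ultimately show ?thesis
    by (metis frame_transition_minus)
qed

lemma cplx_hsl_frame_transition:
  assumes "cplx_hsl L F L' \<delta>"
  shows "frame_transition (L, F) (L', F) (cosh_vmat \<delta>)"
proof -
  obtain M where "vahlen M" "flag_img (mob M) F = Fh" "line_img (mob M) L = Lv"
    "vahlen (cosh_vmat \<delta>)" "flag_img (mob (cosh_vmat \<delta>)) Fh = Fh"
    "line_img (mob (cosh_vmat \<delta>)) Lv = line_img (mob M) L'"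
    using assms unfolding cplx_hsl_def cosh_vmat_def by blast
  then have "frame_img (mob M) (L, F) = base_frame"
    "frame_img (mob M) (L', F) = frame_img (mob (cosh_vmat \<delta>)) base_frame"
    by (simp_all add: frame_img_def base_frame_def)
  with \<open>vahlen M\<close> \<open>vahlen (cosh_vmat \<delta>)\<close> show ?thesis
    unfolding frame_transition_def by blast
qed

lemma quat_double_eq_scaleR_double: "x + x = r *\<^sub>R (y + y) \<Longrightarrow> x = r *\<^sub>R (y :: quat)"
  by (simp add: quat_eq_iff algebra_simps)

text \<open>Each identity is half the sum or difference of two entries of the matrix relation.\<close>
lemma hexagon_identities:
  fixes C1 S1 C2 S2 C3 S3 C4 S4 C5 S5 C6 S6 :: quat and \<epsilon> :: real
  assumes "vmat_mult (C1 + S1, 0, 0, C1 - S1) (vmat_mult (C2, S2, S2, C2) (C3 + S3, 0, 0, C3 - S3))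
    = \<epsilon> *\<^sub>R vmat_adj (vmat_mult (C4, S4, S4, C4) (vmat_mult (C5 + S5, 0, 0, C5 - S5) (C6, S6, S6, C6)))"
  shows "S1 * C2 * S3 + C1 * C2 * C3 = \<epsilon> *\<^sub>R qrev (S4 * C5 * S6 + C4 * C5 * C6)"
    and "S1 * C2 * C3 + C1 * C2 * S3 = \<epsilon> *\<^sub>R qrev (S4 * S5 * S6 - C4 * S5 * C6)"
    and "S1 * S2 * S3 - C1 * S2 * C3 = \<epsilon> *\<^sub>R qrev (S4 * C5 * C6 + C4 * C5 * S6)"
    and "S1 * S2 * C3 - C1 * S2 * S3 = \<epsilon> *\<^sub>R qrev (S4 * S5 * C6 - C4 * S5 * S6)"
proof -
  define X where
    "X = vmat_mult (C1 + S1, 0, 0, C1 - S1) (vmat_mult (C2, S2, S2, C2) (C3 + S3, 0, 0, C3 - S3))"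
  define Y where
    "Y = vmat_adj (vmat_mult (C4, S4, S4, C4) (vmat_mult (C5 + S5, 0, 0, C5 - S5) (C6, S6, S6, C6)))"
  have XY: "X = \<epsilon> *\<^sub>R Y"
    using assms by (simp add: X_def Y_def)
  have lhs: "(S1 * C2 * S3 + C1 * C2 * C3) + (S1 * C2 * S3 + C1 * C2 * C3) = fst X + snd (snd (snd X))"
    "(S1 * C2 * C3 + C1 * C2 * S3) + (S1 * C2 * C3 + C1 * C2 * S3) = fst X - snd (snd (snd X))"
    "(S1 * S2 * S3 - C1 * S2 * C3) + (S1 * S2 * S3 - C1 * S2 * C3) = - (fst (snd X) + fst (snd (snd X)))"
    "(S1 * S2 * C3 - C1 * S2 * S3) + (S1 * S2 * C3 - C1 * S2 * S3) = fst (snd X) - fst (snd (snd X))"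
    by (simp_all add: X_def algebra_simps)
  have rhs: "fst Y + snd (snd (snd Y)) = qrev (S4 * C5 * S6 + C4 * C5 * C6) + qrev (S4 * C5 * S6 + C4 * C5 * C6)"
    "fst Y - snd (snd (snd Y)) = qrev (S4 * S5 * S6 - C4 * S5 * C6) + qrev (S4 * S5 * S6 - C4 * S5 * C6)"
    "- (fst (snd Y) + fst (snd (snd Y))) = qrev (S4 * C5 * C6 + C4 * C5 * S6) + qrev (S4 * C5 * C6 + C4 * C5 * S6)"
    "fst (snd Y) - fst (snd (snd Y)) = qrev (S4 * S5 * C6 - C4 * S5 * S6) + qrev (S4 * S5 * C6 - C4 * S5 * S6)"
    by (simp_all add: Y_def algebra_simps qrev_mult)
  have XY_combinations: "fst X + snd (snd (snd X)) = \<epsilon> *\<^sub>R (fst Y + snd (snd (snd Y)))"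
    "fst X - snd (snd (snd X)) = \<epsilon> *\<^sub>R (fst Y - snd (snd (snd Y)))"
    "- (fst (snd X) + fst (snd (snd X))) = \<epsilon> *\<^sub>R (- (fst (snd Y) + fst (snd (snd Y))))"
    "fst (snd X) - fst (snd (snd X)) = \<epsilon> *\<^sub>R (fst (snd Y) - fst (snd (snd Y)))"
    by (simp_all add: XY scaleR_add_right scaleR_diff_right)
  show "S1 * C2 * S3 + C1 * C2 * C3 = \<epsilon> *\<^sub>R qrev (S4 * C5 * S6 + C4 * C5 * C6)"
    "S1 * C2 * C3 + C1 * C2 * S3 = \<epsilon> *\<^sub>R qrev (S4 * S5 * S6 - C4 * S5 * C6)"
    "S1 * S2 * S3 - C1 * S2 * C3 = \<epsilon> *\<^sub>R qrev (S4 * C5 * C6 + C4 * C5 * S6)"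
    "S1 * S2 * C3 - C1 * S2 * S3 = \<epsilon> *\<^sub>R qrev (S4 * S5 * C6 - C4 * S5 * S6)"
    using lhs XY_combinations rhs by (metis quat_double_eq_scaleR_double)+
qed

theorem theorem1p1:
  fixes L1 L3 L5 :: oline and F2 F4 F6 :: oflag
    and d1 d2 d3 d4 d5 d6 :: quat
  assumes "is_oline L1" "is_oline L3" "is_oline L5"
    and "is_oflag F2" "is_oflag F4" "is_oflag F6"
    and "orth L1 F2" "orth L3 F2" "orth L3 F4" "orth L5 F4" "orth L5 F6" "orth L1 F6"
    and "quat_hsl F6 L1 F2 d1" "quat_hsl F2 L3 F4 d3" "quat_hsl F4 L5 F6 d5"
    and "cplx_hsl L1 F2 L3 d2" "cplx_hsl L3 F4 L5 d4" "cplx_hsl L5 F6 L1 d6"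
  shows "\<exists>\<epsilon>::quat. (\<epsilon> = 1 \<or> \<epsilon> = - 1) \<and>
    qsinh d1 * qcosh d2 * qsinh d3 + qcosh d1 * qcosh d2 * qcosh d3
      = \<epsilon> * qrev (qsinh d4 * qcosh d5 * qsinh d6 + qcosh d4 * qcosh d5 * qcosh d6) \<and>
    qsinh d1 * qcosh d2 * qcosh d3 + qcosh d1 * qcosh d2 * qsinh d3
      = \<epsilon> * qrev (qsinh d4 * qsinh d5 * qsinh d6 - qcosh d4 * qsinh d5 * qcosh d6) \<and>
    qsinh d1 * qsinh d2 * qsinh d3 - qcosh d1 * qsinh d2 * qcosh d3
      = \<epsilon> * qrev (qsinh d4 * qcosh d5 * qcosh d6 + qcosh d4 * qcosh d5 * qsinh d6) \<and>
    qsinh d1 * qsinh d2 * qcosh d3 - qcosh d1 * qsinh d2 * qsinh d3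
      = \<epsilon> * qrev (qsinh d4 * qsinh d5 * qcosh d6 - qcosh d4 * qsinh d5 * qsinh d6)"
proof -
  note side = quat_hsl_frame_transition and turn = cplx_hsl_frame_transition
  have "frame_transition (L1, F6) (L3, F4)
      (vmat_mult (diag_exp_vmat d1) (vmat_mult (cosh_vmat d2) (diag_exp_vmat d3)))"
    using side[OF assms(13)] turn[OF assms(16)] side[OF assms(14)] by (metis frame_transition_trans)
  moreover have "frame_transition (L3, F4) (L1, F6)
      (vmat_mult (cosh_vmat d4) (vmat_mult (diag_exp_vmat d5) (cosh_vmat d6)))"
    using turn[OF assms(17)] side[OF assms(15)] turn[OF assms(18)] by (metis frame_transition_trans)
  ultimately obtain \<epsilon> :: real where \<epsilon>: "\<epsilon> = 1 \<or> \<epsilon> = - 1" and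
    relation: "vmat_mult (diag_exp_vmat d1) (vmat_mult (cosh_vmat d2) (diag_exp_vmat d3)) =
      \<epsilon> *\<^sub>R vmat_adj (vmat_mult (cosh_vmat d4) (vmat_mult (diag_exp_vmat d5) (cosh_vmat d6)))"
    by (metis frame_transition_back scaleR_one scaleR_minus1_left)
  from \<epsilon> hexagon_identities[OF relation[unfolded diag_exp_vmat_def cosh_vmat_def]]
  show ?thesis
    by (intro exI[of _ "of_real \<epsilon>"]) (auto simp: scaleR_conv_of_real)
qed

end
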